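(* Let $\mathcal C=(c^{(i)}_{j,k})$ be a sequence such that there exist $a\in\mathbb R$ and $C_0>0$ with $|c^{(i)}_{j,k}|\le C_0 2^{aj}$ for all $i,j,k$. For $J\ge 0$ and $x\in\mathbb R^d$ put $P_{J,\mathcal C}(x)=\sum_{j=0}^{J}\sum_{i=1}^{N}\sum_{k\in\mathbb Z^d}c^{(i)}_{j,k}\psi^{(i)}_{j,k}(x)$. (1) Let $\gamma<0$ and $x\in\mathbb R^d$. If there is $C_1>0$ such that $|c^{(i)}_{j,k}\psi^{(i)}_{j,k}(x)|\le C_1 2^{\gamma j}$ for all $i,j,k$, then $P_{J,\mathcal C}(x)$ has a limit $f_{\mathcal C}(x)$ as $J\to+\infty$, and for every $\gamma'>\gamma$ there is $C_2>0$ such that $|f_{\mathcal C}(x)-P_{J,\mathcal C}(x)|\le C_2 2^{\gamma' J}$ for all $J\ge0$. (2) Let $\gamma>0$ and $x\in\mathbb R^d$. If the sequence $(P_{j,\mathcal C}(x))_j$ diverges at rate $\gamma$, i.e. there exist $C>0$ and $j_n\to+\infty$ with $|P_{j_n,\mathcal C}(x)|\ge C2^{\gamma j_n}$, then for every $\delta<\gamma$ the wavelet series of $\mathcal C$ diverges at rate at least $\delta$ at $x$, i.e. $\mathcal C\in D^\delta(x)$.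
   Context: Fix integers $d\ge1$, $N\ge1$ and bounded functions $\psi^{(1)},\dots,\psi^{(N)}:\mathbb R^d\to\mathbb C$ with fast decay (for every $n>0$ there is $C_n$ with $|\psi^{(i)}(x)|\le C_n(1+|x|)^{-n}$ for all $x$). The associated wavelet system is $\psi^{(i)}_{j,k}(x)=\psi^{(i)}(2^jx-k)$, $1\le i\le N$, $j\ge0$ an integer, $k\in\mathbb Z^d$ (no orthogonality, normalisation or vanishing moments are assumed). A sequence is a family $\mathcal C=(c^{(i)}_{j,k})$ of complex numbers; its wavelet series is $\sum_{j\ge0}\sum_{i=1}^N\sum_{k\in\mathbb Z^d}c^{(i)}_{j,k}\psi^{(i)}_{j,k}(x)$. For $\gamma\in\mathbb R$ and $x\in\mathbb R^d$, we write $\mathcal C\in D^\gamma(x)$ ("the wavelet series diverges at rate at least $\gamma$ at $x$") if there exist $C>0$ and indices $(i_n,j_n,k_n)$ with $j_n\to+\infty$ and $|c^{(i_n)}_{j_n,k_n}\psi^{(i_n)}_{j_n,k_n}(x)|\ge C2^{\gamma j_n}$ for all $n$. *)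

theory Defs
  imports "HOL-Analysis.Analysis"
begin

definition wav :: "(nat \<Rightarrow> real^'d \<Rightarrow> complex) \<Rightarrow> nat \<Rightarrow> nat \<Rightarrow> int^'d \<Rightarrow> real^'d \<Rightarrow> complex" where
  "wav \<psi> i j k x = \<psi> i ((2::real) ^ j *\<^sub>R x - (\<chi> l. real_of_int (k $ l)))"

definition Psum :: "(nat \<Rightarrow> real^'d \<Rightarrow> complex) \<Rightarrow> (nat \<Rightarrow> nat \<Rightarrow> int^'d \<Rightarrow> complex) \<Rightarrow> nat \<Rightarrow> nat \<Rightarrow> real^'d \<Rightarrow> complex" where
  "Psum \<psi> c N J x = (\<Sum>j\<le>J. \<Sum>i=1..N. infsum (\<lambda>k. c i j k * wav \<psi> i j k x) UNIV)"

definition Drate :: "(nat \<Rightarrow> real^'d \<Rightarrow> complex) \<Rightarrow> (nat \<Rightarrow> nat \<Rightarrow> int^'d \<Rightarrow> complex) \<Rightarrow> nat \<Rightarrow> real \<Rightarrow> real^'d \<Rightarrow> bool" where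
  "Drate \<psi> c N \<gamma> x \<longleftrightarrow> (\<exists>C>0. \<exists>is js ks. filterlim (js :: nat \<Rightarrow> nat) at_top sequentially \<and>
     (\<forall>n. is n \<in> {1..N} \<and> norm (c (is n) (js n) (ks n) * wav \<psi> (is n) (js n) (ks n) x) \<ge> C * 2 powr (\<gamma> * real (js n))))"

end

theory Submission
  imports Defs "HOL-Real_Asymp.Real_Asymp"
begin

text \<open>
  At level j, the decay of the wavelets and the bound on the coefficients give
  |c psi_{j,k}(x)| <= C 2^(a j) (1 + |2^j x - k|)^(-n), which is summable over k in Z^d with a bound
  uniform in x (the weight is dominated by a product of one-dimensional weights, so the lattice sum
  factorises). Taking a weighted geometric mean of this with the pointwise bound
  |c psi_{j,k}(x)| <= B 2^(gamma j), with weight theta close to 1 on the latter, shows that the whole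
  level T_j(x) = sum_i sum_k c psi_{j,k}(x) is O(2^(beta j)) for every beta > gamma.
  Part (1) then follows by summing a geometric series. For part (2), if the series were not in
  D^delta(x), its terms would eventually be bounded by 2^(delta j), so the partial sums would be
  O(2^(beta J)) for some beta < gamma, contradicting the assumed growth.
\<close>

definition int_inverse_square_sum :: real where
  "int_inverse_square_sum = (\<Sum>\<^sub>\<infinity>z::int. 1 / (1 + \<bar>real_of_int z\<bar>)^2)"

lemma summable_on_int_inverse_square:
  "(\<lambda>z::int. 1 / (1 + \<bar>real_of_int z\<bar>)^2) summable_on UNIV"
proof -
  let ?g = "\<lambda>z::int. 1 / (1 + \<bar>real_of_int z\<bar>)^2"
  have "summable (\<lambda>n. inverse ((real (Suc n))\<^sup>2))"
    using inverse_power_summable[of 2] by (subst summable_Suc_iff) simp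
  hence nat: "(\<lambda>n. inverse ((real (Suc n))\<^sup>2)) summable_on UNIV"
    by (intro norm_summable_imp_summable_on) simp
  have "(?g \<circ> int) = (\<lambda>n. inverse ((real (Suc n))\<^sup>2))"
       "(?g \<circ> (\<lambda>n. - int n)) = (\<lambda>n. inverse ((real (Suc n))\<^sup>2))"
    by (auto simp: fun_eq_iff inverse_eq_divide add.commute)
  hence "?g summable_on range int" "?g summable_on range (\<lambda>n. - int n)"
    using nat by (auto simp: summable_on_reindex inj_on_def)
  moreover have "range int \<union> range (\<lambda>n. - int n) = UNIV"
    by (auto, metis int_cases rangeI)
  ultimately show ?thesis
    by (metis summable_on_union)
qed

lemma int_inverse_square_sum_pos: "int_inverse_square_sum > 0"
proof -
  have "(\<Sum>z\<in>{0::int}. 1 / (1 + \<bar>real_of_int z\<bar>)^2) \<le> int_inverse_square_sum"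
    unfolding int_inverse_square_sum_def
    by (rule finite_sum_le_infsum[OF summable_on_int_inverse_square]) auto
  thus ?thesis by simp
qed

lemma inverse_square_shift_le:
  fixes t :: real and z :: int
  shows "1 / (1 + \<bar>t - z\<bar>)^2 \<le> 4 / (1 + \<bar>real_of_int (z - \<lfloor>t\<rfloor>)\<bar>)^2"
proof -
  have "1 / (1 + u)^2 \<le> 4 / (1 + v)^2" if "0 \<le> u" "0 \<le> v" "1 + v \<le> 2 * (1 + u)" for u v :: real
  proof -
    have "(1 + v)^2 \<le> (2 * (1 + u))^2"
      using that by (intro power_mono) auto
    hence "4 / (2 * (1 + u))^2 \<le> 4 / (1 + v)^2"
      using that by (intro divide_left_mono) auto
    moreover have "(2 * (1 + u))^2 = 4 * (1 + u)^2"
      by algebra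
    ultimately show ?thesis
      by simp
  qed
  moreover have "t - 1 < \<lfloor>t\<rfloor>" "\<lfloor>t\<rfloor> \<le> t"
    by linarith+
  hence "1 + \<bar>real_of_int (z - \<lfloor>t\<rfloor>)\<bar> \<le> 2 * (1 + \<bar>t - z\<bar>)"
    by (smt (verit) of_int_diff)
  ultimately show ?thesis
    by simp
qed

lemma shifted_inverse_square_sum:
  fixes t :: real
  shows "(\<lambda>z::int. 1 / (1 + \<bar>t - z\<bar>)^2) summable_on UNIV"
    and "(\<Sum>\<^sub>\<infinity>z::int. 1 / (1 + \<bar>t - z\<bar>)^2) \<le> 4 * int_inverse_square_sum"
proof -
  let ?h = "\<lambda>z::int. 1 / (1 + \<bar>real_of_int z\<bar>)^2"
  have bij: "bij_betw (\<lambda>z. z - \<lfloor>t\<rfloor>) UNIV UNIV"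
    by (rule bij_betwI[of _ _ _ "\<lambda>z. z + \<lfloor>t\<rfloor>"]) auto
  have "(\<lambda>z. ?h (z - \<lfloor>t\<rfloor>)) summable_on UNIV"
    using summable_on_reindex_bij_betw[OF bij, of ?h] summable_on_int_inverse_square by simp
  hence g: "(\<lambda>z. 4 * ?h (z - \<lfloor>t\<rfloor>)) summable_on UNIV"
    by (rule summable_on_cmult_right)
  have "(\<Sum>\<^sub>\<infinity>z. 4 * ?h (z - \<lfloor>t\<rfloor>)) = 4 * int_inverse_square_sum"
    unfolding infsum_cmult_right' int_inverse_square_sum_def
    using infsum_reindex_bij_betw[OF bij, of ?h] by simp
  moreover have le: "1 / (1 + \<bar>t - z\<bar>)^2 \<le> 4 * ?h (z - \<lfloor>t\<rfloor>)" for z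
    using inverse_square_shift_le[of t z] by simp
  moreover show "(\<lambda>z::int. 1 / (1 + \<bar>t - z\<bar>)^2) summable_on UNIV"
    by (rule summable_on_comparison_test[OF g]) (use le in auto)
  ultimately show "(\<Sum>\<^sub>\<infinity>z::int. 1 / (1 + \<bar>t - z\<bar>)^2) \<le> 4 * int_inverse_square_sum"
    using infsum_mono[OF _ g le] by metis
qed

lemma lattice_product_sum:
  fixes y :: "real^'d"
  shows "(\<lambda>k::int^'d. \<Prod>l\<in>UNIV. 1 / (1 + \<bar>y$l - k$l\<bar>)^2) summable_on UNIV"
    and "(\<Sum>\<^sub>\<infinity>k::int^'d. \<Prod>l\<in>UNIV. 1 / (1 + \<bar>y$l - k$l\<bar>)^2)
           \<le> (4 * int_inverse_square_sum) ^ CARD('d)"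
proof -
  define h where "h l z = 1 / (1 + \<bar>y$l - real_of_int z\<bar>)^2" for l z
  have h_pos: "infsum (h l) UNIV > 0" for l
  proof -
    have "(\<Sum>z\<in>{0}. h l z) \<le> infsum (h l) UNIV"
      unfolding h_def by (rule finite_sum_le_infsum[OF shifted_inverse_square_sum(1)]) auto
    moreover have "h l 0 > 0"
      unfolding h_def by (simp add: add_pos_nonneg)
    ultimately show ?thesis by simp
  qed
  have prod_eq: "(\<Sum>\<^sub>\<infinity>g\<in>PiE UNIV (\<lambda>_. UNIV). \<Prod>l\<in>UNIV. h l (g l)) = (\<Prod>l\<in>UNIV. infsum (h l) UNIV)"
    by (rule infsum_prod_PiE_abs) (auto simp: h_def shifted_inverse_square_sum(1))
  \<comment> \<open>A non-summable family has sum 0, which the positive product formula rules out.\<close>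
  have "(\<lambda>g. \<Prod>l\<in>UNIV. h l (g l)) summable_on (UNIV :: ('d \<Rightarrow> int) set)"
  proof (rule ccontr)
    assume "\<not> ?thesis"
    hence "(\<Sum>\<^sub>\<infinity>g\<in>(UNIV :: ('d \<Rightarrow> int) set). \<Prod>l\<in>UNIV. h l (g l)) = 0"
      by (rule infsum_not_exists)
    moreover have "(\<Prod>l\<in>UNIV. infsum (h l) UNIV) > 0"
      using h_pos by (intro prod_pos) (auto intro: less_imp_le)
    ultimately show False
      using prod_eq by (simp del: prod_zero_iff)
  qed
  moreover have bij: "bij_betw vec_nth (UNIV :: (int^'d) set) UNIV"
    by (intro bij_betwI[of _ _ _ vec_lambda]) (auto simp: vec_eq_iff)
  ultimately show "(\<lambda>k::int^'d. \<Prod>l\<in>UNIV. 1 / (1 + \<bar>y$l - k$l\<bar>)^2) summable_on UNIV"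
    using summable_on_reindex_bij_betw[OF bij, of "\<lambda>g. \<Prod>l\<in>UNIV. h l (g l)"] by (simp add: h_def)
  have "(\<Sum>\<^sub>\<infinity>k::int^'d. \<Prod>l\<in>UNIV. 1 / (1 + \<bar>y$l - k$l\<bar>)^2) = (\<Prod>l\<in>UNIV. infsum (h l) UNIV)"
    using infsum_reindex_bij_betw[OF bij, of "\<lambda>g. \<Prod>l\<in>UNIV. h l (g l)"] prod_eq by (simp add: h_def)
  also have "\<dots> \<le> (\<Prod>l\<in>(UNIV::'d set). 4 * int_inverse_square_sum)"
    using h_pos shifted_inverse_square_sum(2) unfolding h_def
    by (intro prod_mono) (auto intro: less_imp_le)
  finally show "(\<Sum>\<^sub>\<infinity>k::int^'d. \<Prod>l\<in>UNIV. 1 / (1 + \<bar>y$l - k$l\<bar>)^2)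
           \<le> (4 * int_inverse_square_sum) ^ CARD('d)"
    by simp
qed

lemma powr_le_prod_inverse_square:
  fixes z :: "real^'d"
  shows "(1 + norm z) powr (- (2 * real CARD('d))) \<le> (\<Prod>l\<in>UNIV. 1 / (1 + \<bar>z$l\<bar>)^2)"
proof -
  have pos: "1 + norm z > 0"
    by (simp add: add_pos_nonneg)
  have "(1 + norm z) powr (- (2 * real CARD('d))) = inverse ((1 + norm z) ^ (2 * CARD('d)))"
    using powr_realpow[OF pos, of "2 * CARD('d)"] by (simp add: powr_minus)
  also have "\<dots> = (\<Prod>l\<in>(UNIV::'d set). 1 / (1 + norm z)^2)"
    by (simp add: power_mult power_one_over inverse_eq_divide)
  also have "\<dots> \<le> (\<Prod>l\<in>UNIV. 1 / (1 + \<bar>z$l\<bar>)^2)"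
  proof (rule prod_mono)
    fix l
    have "(1 + \<bar>z$l\<bar>)^2 \<le> (1 + norm z)^2"
      using component_le_norm_cart[of z l] by (intro power_mono) auto
    thus "0 \<le> 1 / (1 + norm z)^2 \<and> 1 / (1 + norm z)^2 \<le> 1 / (1 + \<bar>z$l\<bar>)^2"
      by (auto intro!: divide_left_mono mult_pos_pos)
  qed
  finally show ?thesis .
qed

lemma lattice_decay_sum:
  fixes y :: "real^'d"
  shows "(\<lambda>k::int^'d. (1 + norm (y - (\<chi> l. real_of_int (k$l)))) powr (- (2 * real CARD('d))))
           summable_on UNIV"
    and "(\<Sum>\<^sub>\<infinity>k::int^'d. (1 + norm (y - (\<chi> l. real_of_int (k$l)))) powr (- (2 * real CARD('d))))
           \<le> (4 * int_inverse_square_sum) ^ CARD('d)"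
proof -
  let ?w = "\<lambda>k::int^'d. (1 + norm (y - (\<chi> l. real_of_int (k$l)))) powr (- (2 * real CARD('d)))"
  have le: "?w k \<le> (\<Prod>l\<in>UNIV. 1 / (1 + \<bar>y$l - k$l\<bar>)^2)" for k
    using powr_le_prod_inverse_square[of "y - (\<chi> l. real_of_int (k$l))"] by simp
  show "?w summable_on UNIV"
    by (rule summable_on_comparison_test[OF lattice_product_sum(1)]) (use le in auto)
  hence "infsum ?w UNIV \<le> (\<Sum>\<^sub>\<infinity>k::int^'d. \<Prod>l\<in>UNIV. 1 / (1 + \<bar>y$l - k$l\<bar>)^2)"
    by (rule infsum_mono[OF _ lattice_product_sum(1) le])
  also note lattice_product_sum(2)
  finally show "infsum ?w UNIV \<le> (4 * int_inverse_square_sum) ^ CARD('d)" .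
qed

lemma le_powr_interpolation:
  fixes u A B \<theta> :: real
  assumes "0 < \<theta>" "\<theta> < 1" "0 \<le> u" "u \<le> B" "u \<le> A"
  shows "u \<le> B powr \<theta> * A powr (1 - \<theta>)"
proof (cases "u = 0")
  case False
  hence "u = u powr \<theta> * u powr (1 - \<theta>)"
    using assms by (simp add: powr_add[symmetric])
  also have "\<dots> \<le> B powr \<theta> * A powr (1 - \<theta>)"
    using assms by (intro mult_mono powr_mono2) auto
  finally show ?thesis .
qed (use assms in simp)

lemma norm_lattice_sum_interpolation:
  fixes b :: "int^'d \<Rightarrow> complex" and \<phi> :: "real^'d \<Rightarrow> complex" and y :: "real^'d"
  assumes \<theta>: "0 < \<theta>" "\<theta> < 1"
    and coef: "\<And>k. norm (b k) \<le> A"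
    and decay: "\<And>z. norm (\<phi> z) \<le> D * (1 + norm z) powr (- (2 * real CARD('d) / (1 - \<theta>)))"
    and small: "\<And>k. norm (b k * \<phi> (y - (\<chi> l. real_of_int (k$l)))) \<le> B"
  shows "(\<lambda>k. b k * \<phi> (y - (\<chi> l. real_of_int (k$l)))) summable_on UNIV"
    and "norm (\<Sum>\<^sub>\<infinity>k. b k * \<phi> (y - (\<chi> l. real_of_int (k$l))))
           \<le> (4 * int_inverse_square_sum) ^ CARD('d) * (B powr \<theta> * (A * D) powr (1 - \<theta>))"
proof -
  define M where "M = B powr \<theta> * (A * D) powr (1 - \<theta>)"
  let ?F = "\<lambda>k. b k * \<phi> (y - (\<chi> l. real_of_int (k$l)))"
  let ?w = "\<lambda>k::int^'d. (1 + norm (y - (\<chi> l. real_of_int (k$l)))) powr (- (2 * real CARD('d)))"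
  have A: "A \<ge> 0"
    by (rule order_trans[OF norm_ge_zero coef])
  have "0 \<le> D * (1 + norm (0::real^'d)) powr (- (2 * real CARD('d) / (1 - \<theta>)))"
    by (rule order_trans[OF norm_ge_zero decay])
  hence D: "D \<ge> 0"
    by simp
  have pointwise: "norm (?F k) \<le> M * ?w k" for k
  proof -
    define r where "r = 1 + norm (y - (\<chi> l. real_of_int (k$l)))"
    have r: "r > 0"
      by (simp add: r_def add_pos_nonneg)
    have "norm (?F k) \<le> A * (D * r powr (- (2 * real CARD('d) / (1 - \<theta>))))"
      unfolding norm_mult r_def using A by (intro mult_mono coef decay) auto
    hence "norm (?F k) \<le> B powr \<theta> * (A * D * r powr (- (2 * real CARD('d) / (1 - \<theta>)))) powr (1 - \<theta>)"
      using \<theta> small[of k] by (intro le_powr_interpolation) (auto simp: mult.assoc)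
    also have "\<dots> = M * r powr (- (2 * real CARD('d)))"
      using \<theta> A D r by (simp add: M_def powr_mult powr_powr)
    finally show ?thesis
      by (simp add: r_def)
  qed
  have Mw: "(\<lambda>k. M * ?w k) summable_on UNIV"
    by (intro summable_on_cmult_right lattice_decay_sum(1))
  have norm_F: "(\<lambda>k. norm (?F k)) summable_on UNIV"
    by (rule summable_on_comparison_test[OF Mw]) (use pointwise in auto)
  thus "?F summable_on UNIV"
    by (rule abs_summable_summable)
  have "norm (infsum ?F UNIV) \<le> (\<Sum>\<^sub>\<infinity>k. norm (?F k))"
    using norm_F by (rule norm_infsum_bound)
  also have "\<dots> \<le> (\<Sum>\<^sub>\<infinity>k. M * ?w k)"
    using norm_F Mw pointwise by (rule infsum_mono)
  also have "\<dots> \<le> M * (4 * int_inverse_square_sum) ^ CARD('d)"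
    unfolding infsum_cmult_right' using lattice_decay_sum(2)
    by (rule mult_left_mono) (simp add: M_def)
  finally show "norm (infsum ?F UNIV) \<le> (4 * int_inverse_square_sum) ^ CARD('d) * M"
    by (simp add: mult.commute)
qed

lemma exists_interpolation_exponent:
  fixes a \<gamma> \<beta> :: real
  assumes "\<gamma> < \<beta>"
  shows "\<exists>\<theta>. 0 < \<theta> \<and> \<theta> < 1 \<and> \<theta> * \<gamma> + (1 - \<theta>) * a \<le> \<beta>"
proof -
  define e where "e = min (1/2) ((\<beta> - \<gamma>) / (\<bar>a - \<gamma>\<bar> + 1))"
  have e: "0 < e" "e < 1"
    using assms by (auto simp: e_def)
  have "e * (\<bar>a - \<gamma>\<bar> + 1) \<le> \<beta> - \<gamma>"
    unfolding e_def by (simp add: min_le_iff_disj pos_le_divide_eq[symmetric] add_pos_nonneg)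
  moreover have "e * (a - \<gamma>) \<le> e * \<bar>a - \<gamma>\<bar>"
    using e by (intro mult_left_mono) auto
  ultimately have "(1 - e) * \<gamma> + e * a \<le> \<beta>"
    using e by (simp add: algebra_simps)
  thus ?thesis
    using e by (intro exI[of _ "1 - e"]) auto
qed

definition wavelet_level ::
    "(nat \<Rightarrow> real^'d \<Rightarrow> complex) \<Rightarrow> (nat \<Rightarrow> nat \<Rightarrow> int^'d \<Rightarrow> complex) \<Rightarrow> nat \<Rightarrow> nat \<Rightarrow> real^'d \<Rightarrow> complex"
  where "wavelet_level \<psi> c N j x = (\<Sum>i=1..N. \<Sum>\<^sub>\<infinity>k. c i j k * wav \<psi> i j k x)"

lemma Psum_eq_sum_wavelet_level: "Psum \<psi> c N J x = (\<Sum>j\<le>J. wavelet_level \<psi> c N j x)"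
  by (simp add: Psum_def wavelet_level_def)

lemma wavelet_level_bound:
  fixes \<psi> :: "nat \<Rightarrow> real^'d \<Rightarrow> complex" and c :: "nat \<Rightarrow> nat \<Rightarrow> int^'d \<Rightarrow> complex"
  assumes decay: "\<forall>i\<in>{1..N}. \<forall>n::real. n > 0 \<longrightarrow> (\<exists>Cn. \<forall>y. norm (\<psi> i y) \<le> Cn * (1 + norm y) powr (- n))"
    and coef: "\<forall>i\<in>{1..N}. \<forall>j k. norm (c i j k) \<le> C0 * 2 powr (a * real j)"
    and "\<gamma> < \<beta>"
  shows "\<exists>K. \<forall>j. (\<forall>i\<in>{1..N}. \<forall>k. norm (c i j k * wav \<psi> i j k x) \<le> B * 2 powr (\<gamma> * real j))
           \<longrightarrow> norm (wavelet_level \<psi> c N j x) \<le> K * 2 powr (\<beta> * real j)"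
proof -
  obtain \<theta> where \<theta>: "0 < \<theta>" "\<theta> < 1" and exponent: "\<theta> * \<gamma> + (1 - \<theta>) * a \<le> \<beta>"
    using exists_interpolation_exponent[OF \<open>\<gamma> < \<beta>\<close>] by blast
  have "\<forall>i\<in>{1..N}. \<exists>Cn. \<forall>y. norm (\<psi> i y) \<le> Cn * (1 + norm y) powr (- (2 * real CARD('d) / (1 - \<theta>)))"
    using decay \<theta> by simp
  then obtain Cn where Cn: "\<And>i y. i \<in> {1..N} \<Longrightarrow>
      norm (\<psi> i y) \<le> Cn i * (1 + norm y) powr (- (2 * real CARD('d) / (1 - \<theta>)))"
    by metis
  define S where "S = (4 * int_inverse_square_sum) ^ CARD('d)"
  define K where "K = (\<Sum>i=1..N. S * (B powr \<theta> * (C0 * Cn i) powr (1 - \<theta>)))"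
  show ?thesis
  proof (intro exI allI impI)
    fix j
    assume small: "\<forall>i\<in>{1..N}. \<forall>k. norm (c i j k * wav \<psi> i j k x) \<le> B * 2 powr (\<gamma> * real j)"
    have level_i: "norm (\<Sum>\<^sub>\<infinity>k. c i j k * wav \<psi> i j k x)
        \<le> S * (B powr \<theta> * (C0 * Cn i) powr (1 - \<theta>)) * 2 powr (\<beta> * real j)"
      if i: "i \<in> {1..N}" for i
    proof -
      have B: "B \<ge> 0" and C0: "C0 \<ge> 0"
        using order_trans[OF norm_ge_zero small[rule_format, OF i, of 0]]
          order_trans[OF norm_ge_zero coef[rule_format, OF i, of j 0]]
        by (simp_all add: zero_le_mult_iff)
      have Cn_nonneg: "Cn i \<ge> 0"
        using order_trans[OF norm_ge_zero Cn[OF i, of 0]] by simp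
      have "norm (\<Sum>\<^sub>\<infinity>k. c i j k * wav \<psi> i j k x)
          \<le> S * ((B * 2 powr (\<gamma> * real j)) powr \<theta> * (C0 * 2 powr (a * real j) * Cn i) powr (1 - \<theta>))"
        unfolding wav_def S_def
        by (rule norm_lattice_sum_interpolation(2)[OF \<theta>])
           (use coef i Cn small in \<open>auto simp: wav_def\<close>)
      also have "\<dots> = S * (B powr \<theta> * (C0 * Cn i) powr (1 - \<theta>))
          * 2 powr ((\<theta> * \<gamma> + (1 - \<theta>) * a) * real j)"
        using B C0 Cn_nonneg
        by (simp add: powr_mult powr_powr powr_add[symmetric] algebra_simps)
      also have "\<dots> \<le> S * (B powr \<theta> * (C0 * Cn i) powr (1 - \<theta>)) * 2 powr (\<beta> * real j)"
        using exponent int_inverse_square_sum_pos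
        by (intro mult_left_mono powr_mono mult_right_mono) (auto simp: S_def)
      finally show ?thesis .
    qed
    have "norm (wavelet_level \<psi> c N j x) \<le> (\<Sum>i=1..N. norm (\<Sum>\<^sub>\<infinity>k. c i j k * wav \<psi> i j k x))"
      unfolding wavelet_level_def by (rule norm_sum)
    also have "\<dots> \<le> (\<Sum>i=1..N. S * (B powr \<theta> * (C0 * Cn i) powr (1 - \<theta>)) * 2 powr (\<beta> * real j))"
      using level_i by (rule sum_mono)
    finally show "norm (wavelet_level \<psi> c N j x) \<le> K * 2 powr (\<beta> * real j)"
      by (simp add: K_def sum_distrib_right)
  qed
qed

lemma powr_mult_real_eq_power:
  fixes b :: real
  assumes "b > 0"
  shows "b powr (\<beta> * real j) = (b powr \<beta>) ^ j"
  using assms by (simp add: powr_powr[symmetric] powr_realpow)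

lemma geometric_tail_bound:
  fixes T :: "nat \<Rightarrow> 'a::banach"
  assumes "\<beta> < 0" and T: "\<And>j. norm (T j) \<le> K * 2 powr (\<beta> * real j)"
  shows "summable T"
    and "norm (suminf T - (\<Sum>j\<le>J. T j)) \<le> K / (1 - 2 powr \<beta>) * 2 powr (\<beta> * real J)"
proof -
  define r where "r = (2::real) powr \<beta>"
  have r: "0 < r" "r < 1"
    using \<open>\<beta> < 0\<close> by (auto simp: r_def powr_less_one)
  have Tr: "norm (T j) \<le> K * r ^ j" for j
    using T[of j] by (simp add: powr_mult_real_eq_power r_def)
  have K: "K \<ge> 0"
    using order_trans[OF norm_ge_zero Tr[of 0]] by simp
  have "summable (\<lambda>j. K * r ^ j)"
    using r by (intro summable_mult summable_geometric) auto
  thus T_summable: "summable T"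
    by (rule summable_comparison_test[rotated]) (use Tr in auto)
  have tail_sums: "(\<lambda>i. T (i + Suc J)) sums (suminf T - (\<Sum>j\<le>J. T j))"
    using sums_split_initial_segment[OF summable_sums[OF T_summable], of "Suc J"]
    by (simp add: lessThan_Suc_atMost)
  have geom_sums: "(\<lambda>i. K * r ^ Suc J * r ^ i) sums (K * r ^ Suc J * (1 / (1 - r)))"
    using sums_mult[OF geometric_sums[of r], of "K * r ^ Suc J"] r by simp
  have "norm (\<Sum>i. T (i + Suc J)) \<le> (\<Sum>i. K * r ^ Suc J * r ^ i)"
  proof (rule norm_suminf_le)
    show "norm (T (i + Suc J)) \<le> K * r ^ Suc J * r ^ i" for i
      using Tr[of "i + Suc J"] by (simp add: power_add mult_ac)
  qed (rule sums_summable[OF geom_sums])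
  hence "norm (suminf T - (\<Sum>j\<le>J. T j)) \<le> K * r ^ Suc J * (1 / (1 - r))"
    unfolding sums_unique[OF tail_sums] sums_unique[OF geom_sums] .
  also have "\<dots> \<le> K * r ^ J * (1 / (1 - r))"
    using r K power_decreasing[of J "Suc J" r] by (intro mult_right_mono mult_left_mono) auto
  finally show "norm (suminf T - (\<Sum>j\<le>J. T j)) \<le> K / (1 - 2 powr \<beta>) * 2 powr (\<beta> * real J)"
    by (simp add: powr_mult_real_eq_power r_def mult_ac)
qed

lemma partial_sums_converge_at_rate:
  fixes T :: "nat \<Rightarrow> 'a::banach"
  assumes "\<gamma> < 0" and T: "\<And>\<beta>. \<gamma> < \<beta> \<Longrightarrow> \<exists>K. \<forall>j. norm (T j) \<le> K * 2 powr (\<beta> * real j)"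
  shows "\<exists>f. (\<lambda>J. \<Sum>j\<le>J. T j) \<longlonglongrightarrow> f \<and>
           (\<forall>\<gamma>'>\<gamma>. \<exists>C>0. \<forall>J. norm (f - (\<Sum>j\<le>J. T j)) \<le> C * 2 powr (\<gamma>' * real J))"
proof -
  obtain K where "\<forall>j. norm (T j) \<le> K * 2 powr (\<gamma> / 2 * real j)"
    using T[of "\<gamma> / 2"] \<open>\<gamma> < 0\<close> by auto
  hence "summable T"
    using geometric_tail_bound(1)[of "\<gamma> / 2"] \<open>\<gamma> < 0\<close> by auto
  hence "(\<lambda>J. \<Sum>j\<le>J. T j) \<longlonglongrightarrow> suminf T"
    using LIMSEQ_Suc[OF summable_LIMSEQ] by (simp add: lessThan_Suc_atMost)
  moreover have "\<exists>C>0. \<forall>J. norm (suminf T - (\<Sum>j\<le>J. T j)) \<le> C * 2 powr (\<gamma>' * real J)"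
    if "\<gamma> < \<gamma>'" for \<gamma>'
  proof -
    define \<beta> where "\<beta> = min \<gamma>' (\<gamma> / 2)"
    have \<beta>: "\<gamma> < \<beta>" "\<beta> < 0" "\<beta> \<le> \<gamma>'"
      using \<open>\<gamma> < 0\<close> \<open>\<gamma> < \<gamma>'\<close> by (auto simp: \<beta>_def)
    obtain K where K: "\<And>j. norm (T j) \<le> K * 2 powr (\<beta> * real j)"
      using T[OF \<beta>(1)] by auto
    define C where "C = K / (1 - 2 powr \<beta>) + 1"
    have "K \<ge> 0"
      using order_trans[OF norm_ge_zero K[of 0]] by simp
    moreover have "2 powr \<beta> < 1"
      using \<beta> by (simp add: powr_less_one)
    ultimately have "K / (1 - 2 powr \<beta>) \<ge> 0"
      by simp
    hence "C > 0"
      by (simp add: C_def)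
    moreover have "norm (suminf T - (\<Sum>j\<le>J. T j)) \<le> C * 2 powr (\<gamma>' * real J)" for J
    proof -
      have "norm (suminf T - (\<Sum>j\<le>J. T j)) \<le> K / (1 - 2 powr \<beta>) * 2 powr (\<beta> * real J)"
        using geometric_tail_bound(2)[OF \<beta>(2) K] .
      also have "\<dots> \<le> C * 2 powr (\<gamma>' * real J)"
        using \<open>K / (1 - 2 powr \<beta>) \<ge> 0\<close> \<beta>(3)
        by (intro mult_mono powr_mono mult_right_mono) (auto simp: C_def)
      finally show ?thesis .
    qed
    ultimately show ?thesis
      by blast
  qed
  ultimately show ?thesis
    by blast
qed

lemma partial_sums_growth_bound:
  fixes T :: "nat \<Rightarrow> 'a::real_normed_vector"
  assumes "0 < \<beta>" and T: "\<And>j. j0 \<le> j \<Longrightarrow> norm (T j) \<le> K * 2 powr (\<beta> * real j)"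
  shows "\<exists>L. \<forall>J. norm (\<Sum>j\<le>J. T j) \<le> L * 2 powr (\<beta> * real J)"
proof -
  define r where "r = (2::real) powr \<beta>"
  define M where "M = (\<Sum>j<j0. norm (T j))"
  have r: "r > 1"
    using \<open>0 < \<beta>\<close> by (simp add: r_def)
  have K: "K \<ge> 0"
    using order_trans[OF norm_ge_zero T[of j0]] by (simp add: zero_le_mult_iff)
  have M: "M \<ge> 0"
    by (simp add: M_def sum_nonneg)
  have T_le: "norm (T j) \<le> (K + M) * r ^ j" for j
  proof (cases "j0 \<le> j")
    case True
    have "norm (T j) \<le> K * r ^ j"
      using T[OF True] by (simp add: powr_mult_real_eq_power r_def)
    moreover have "0 \<le> M * r ^ j"
      using M r by simp
    ultimately show ?thesis
      unfolding distrib_right by linarith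
  next
    case False
    hence "norm (T j) \<le> M"
      unfolding M_def by (intro member_le_sum) auto
    also have "M \<le> (K + M) * r ^ j"
      using K M r one_le_power[of r j] mult_left_mono[of 1 "r ^ j" "K + M"] by simp
    finally show ?thesis .
  qed
  have "norm (\<Sum>j\<le>J. T j) \<le> (K + M) * (r / (r - 1)) * 2 powr (\<beta> * real J)" for J
  proof -
    have "norm (\<Sum>j\<le>J. T j) \<le> (\<Sum>j\<le>J. (K + M) * r ^ j)"
      using T_le by (intro order_trans[OF norm_sum sum_mono])
    also have "\<dots> = (K + M) * ((r ^ Suc J - 1) / (r - 1))"
      unfolding sum_distrib_left[symmetric] lessThan_Suc_atMost[symmetric]
      using r by (subst geometric_sum) auto
    also have "\<dots> \<le> (K + M) * (r / (r - 1) * r ^ J)"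
      using r K M by (intro mult_left_mono) (simp_all add: divide_right_mono)
    finally show ?thesis
      by (simp add: powr_mult_real_eq_power r_def[symmetric] mult_ac)
  qed
  thus ?thesis
    by blast
qed

lemma exists_powr_rate_exceeds:
  fixes js :: "nat \<Rightarrow> nat"
  assumes "\<beta> < \<gamma>" and "C > 0" and js: "filterlim js at_top sequentially"
  shows "\<exists>n. L * 2 powr (\<beta> * real (js n)) < C * 2 powr (\<gamma> * real (js n))"
proof -
  have "filterlim (\<lambda>t::real. 2 powr ((\<gamma> - \<beta>) * t)) at_top at_top"
    using \<open>\<beta> < \<gamma>\<close> by real_asymp
  hence "filterlim (\<lambda>n. 2 powr ((\<gamma> - \<beta>) * real (js n))) at_top sequentially"
    using filterlim_compose[OF _ filterlim_compose[OF filterlim_real_sequentially js]] by blast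
  then obtain n where "L / C < 2 powr ((\<gamma> - \<beta>) * real (js n))"
    unfolding filterlim_at_top_dense by (meson eventually_happens' sequentially_bot)
  hence "L * 2 powr (\<beta> * real (js n)) < C * 2 powr ((\<gamma> - \<beta>) * real (js n)) * 2 powr (\<beta> * real (js n))"
    using \<open>C > 0\<close> by (simp add: pos_divide_less_eq mult.commute)
  also have "\<dots> = C * 2 powr (\<gamma> * real (js n))"
    by (simp add: powr_add[symmetric] algebra_simps)
  finally show ?thesis
    by blast
qed

lemma eventually_bounded_unless_Drate:
  assumes "\<not> Drate \<psi> c N \<delta> x"
  shows "\<exists>j0. \<forall>j\<ge>j0. \<forall>i\<in>{1..N}. \<forall>k. norm (c i j k * wav \<psi> i j k x) \<le> 2 powr (\<delta> * real j)"
proof (rule ccontr)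
  assume "\<not> ?thesis"
  hence "\<forall>n. \<exists>j i k. n \<le> j \<and> i \<in> {1..N} \<and> 2 powr (\<delta> * real j) < norm (c i j k * wav \<psi> i j k x)"
    by (meson not_le)
  then obtain J I K where JIK: "\<And>n. n \<le> J n \<and> I n \<in> {1..N} \<and>
      2 powr (\<delta> * real (J n)) < norm (c (I n) (J n) (K n) * wav \<psi> (I n) (J n) (K n) x)"
    by metis
  have "filterlim J at_top sequentially"
    using JIK by (intro filterlim_at_top_mono[OF filterlim_ident]) auto
  hence "Drate \<psi> c N \<delta> x"
    unfolding Drate_def using JIK
    by (intro exI[of _ 1] conjI exI[of _ I] exI[of _ J] exI[of _ K]) (auto intro: less_imp_le)
  with assms show False
    by blast
qed

lemma wavelet_series_convergence_rate:
  fixes \<psi> :: "nat \<Rightarrow> real^'d \<Rightarrow> complex" and c :: "nat \<Rightarrow> nat \<Rightarrow> int^'d \<Rightarrow> complex"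
  assumes decay: "\<forall>i\<in>{1..N}. \<forall>n::real. n > 0 \<longrightarrow> (\<exists>Cn. \<forall>y. norm (\<psi> i y) \<le> Cn * (1 + norm y) powr (- n))"
    and coef: "\<forall>i\<in>{1..N}. \<forall>j k. norm (c i j k) \<le> C0 * 2 powr (a * real j)"
    and "\<gamma> < 0"
    and small: "\<forall>i\<in>{1..N}. \<forall>j k. norm (c i j k * wav \<psi> i j k x) \<le> C1 * 2 powr (\<gamma> * real j)"
  shows "\<exists>f. (\<lambda>J. Psum \<psi> c N J x) \<longlonglongrightarrow> f \<and>
           (\<forall>\<gamma>'>\<gamma>. \<exists>C2>0. \<forall>J. norm (f - Psum \<psi> c N J x) \<le> C2 * 2 powr (\<gamma>' * real J))"
  unfolding Psum_eq_sum_wavelet_level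
proof (rule partial_sums_converge_at_rate[OF \<open>\<gamma> < 0\<close>])
  fix \<beta> assume "\<gamma> < \<beta>"
  with wavelet_level_bound[OF decay coef, where B = C1 and x = x] small
  show "\<exists>K. \<forall>j. norm (wavelet_level \<psi> c N j x) \<le> K * 2 powr (\<beta> * real j)"
    by blast
qed

lemma wavelet_series_divergence_rate:
  fixes \<psi> :: "nat \<Rightarrow> real^'d \<Rightarrow> complex" and c :: "nat \<Rightarrow> nat \<Rightarrow> int^'d \<Rightarrow> complex"
  assumes decay: "\<forall>i\<in>{1..N}. \<forall>n::real. n > 0 \<longrightarrow> (\<exists>Cn. \<forall>y. norm (\<psi> i y) \<le> Cn * (1 + norm y) powr (- n))"
    and coef: "\<forall>i\<in>{1..N}. \<forall>j k. norm (c i j k) \<le> C0 * 2 powr (a * real j)"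
    and "0 < \<gamma>" "\<delta> < \<gamma>" "C > 0" and js: "filterlim js at_top sequentially"
    and large: "\<And>n. norm (Psum \<psi> c N (js n) x) \<ge> C * 2 powr (\<gamma> * real (js n))"
  shows "Drate \<psi> c N \<delta> x"
proof (rule ccontr)
  assume "\<not> Drate \<psi> c N \<delta> x"
  then obtain j0 where small:
    "\<forall>j\<ge>j0. \<forall>i\<in>{1..N}. \<forall>k. norm (c i j k * wav \<psi> i j k x) \<le> 2 powr (\<delta> * real j)"
    using eventually_bounded_unless_Drate by blast
  define \<beta> where "\<beta> = (max \<delta> 0 + \<gamma>) / 2"
  have \<beta>: "\<delta> < \<beta>" "0 < \<beta>" "\<beta> < \<gamma>"
    using \<open>0 < \<gamma>\<close> \<open>\<delta> < \<gamma>\<close> by (auto simp: \<beta>_def)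
  obtain K where "\<forall>j. (\<forall>i\<in>{1..N}. \<forall>k. norm (c i j k * wav \<psi> i j k x) \<le> 1 * 2 powr (\<delta> * real j))
      \<longrightarrow> norm (wavelet_level \<psi> c N j x) \<le> K * 2 powr (\<beta> * real j)"
    using wavelet_level_bound[OF decay coef \<beta>(1)] by blast
  with small have "norm (wavelet_level \<psi> c N j x) \<le> K * 2 powr (\<beta> * real j)" if "j0 \<le> j" for j
    using that by simp
  then obtain L where L: "\<forall>J. norm (Psum \<psi> c N J x) \<le> L * 2 powr (\<beta> * real J)"
    unfolding Psum_eq_sum_wavelet_level
    using partial_sums_growth_bound[OF \<beta>(2), of j0 "\<lambda>j. wavelet_level \<psi> c N j x" K] by blast
  obtain n where "L * 2 powr (\<beta> * real (js n)) < C * 2 powr (\<gamma> * real (js n))"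
    using exists_powr_rate_exceeds[OF \<beta>(3) \<open>C > 0\<close> js] by blast
  with L large show False
    by (meson not_le order_trans)
qed

theorem mainTheorem1:
  fixes \<psi> :: "nat \<Rightarrow> real^'d \<Rightarrow> complex"
    and c :: "nat \<Rightarrow> nat \<Rightarrow> int^'d \<Rightarrow> complex"
    and N :: nat
  assumes N: "N \<ge> 1"
    and bdd: "\<forall>i\<in>{1..N}. bounded (range (\<psi> i))"
    and decay: "\<forall>i\<in>{1..N}. \<forall>n::real. n > 0 \<longrightarrow> (\<exists>Cn. \<forall>y. norm (\<psi> i y) \<le> Cn * (1 + norm y) powr (- n))"
    and coef: "\<exists>a C0. C0 > 0 \<and> (\<forall>i\<in>{1..N}. \<forall>j k. norm (c i j k) \<le> C0 * 2 powr (a * real j))"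
  shows
    "(\<forall>\<gamma> x. \<gamma> < 0 \<longrightarrow>
        (\<exists>C1>0. \<forall>i\<in>{1..N}. \<forall>j k. norm (c i j k * wav \<psi> i j k x) \<le> C1 * 2 powr (\<gamma> * real j)) \<longrightarrow>
        (\<exists>f. (\<lambda>J. Psum \<psi> c N J x) \<longlonglongrightarrow> f \<and>
             (\<forall>\<gamma>'>\<gamma>. \<exists>C2>0. \<forall>J. norm (f - Psum \<psi> c N J x) \<le> C2 * 2 powr (\<gamma>' * real J))))
     \<and>
     (\<forall>\<gamma> x. \<gamma> > 0 \<longrightarrow>
        (\<exists>C>0. \<exists>js::nat \<Rightarrow> nat. filterlim js at_top sequentially \<and>
             (\<forall>n. norm (Psum \<psi> c N (js n) x) \<ge> C * 2 powr (\<gamma> * real (js n)))) \<longrightarrow>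
        (\<forall>\<delta><\<gamma>. Drate \<psi> c N \<delta> x))"
proof -
  obtain a C0 where coef': "\<forall>i\<in>{1..N}. \<forall>j k. norm (c i j k) \<le> C0 * 2 powr (a * real j)"
    using coef by blast
  show ?thesis
    using wavelet_series_convergence_rate[OF decay coef']
      wavelet_series_divergence_rate[OF decay coef']
    by blast
qed

end
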